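(* Let $n\ge2$ and let $\Omega\subset\mathbb R^n$ be a domain. Assume $\alpha\in(-n,0)$ and $\phi$ is a Young function satisfying $\underline\Lambda_\phi(\alpha)<\infty$ and, when $\operatorname{diam}\Omega=\infty$, also $\overline\Lambda_\phi(\alpha)<\infty$. Then $C^1_c(\Omega)\subset\mathbf B^{\alpha,\phi}(\Omega)\subset\dot{\mathbf B}^{\alpha,\phi}(\Omega)$ as sets.
   Context: A Young function is $\phi\in C([0,\infty))$, convex, with $\phi(0)=0$, $\phi(t)>0$ for $t>0$, $\lim_{t\to\infty}\phi(t)=\infty$. $\underline\Lambda_\phi(\alpha):=\sup_{x>0}\int_0^1\frac{\phi(t^{1-\alpha}x)}{\phi(x)}\frac{dt}{t^{n+1}}$, $\overline\Lambda_\phi(\alpha):=\sup_{x>0}\int_1^\infty\frac{\phi(t^{-\alpha}x)}{\phi(x)}\frac{dt}{t^{n+1}}$. $\dot{\mathbf B}^{\alpha,\phi}(\Omega)$ is the space of measurable $u$ on $\Omega$ with finite $\|u\|_{\dot{\mathbf B}^{\alpha,\phi}(\Omega)}:=\inf\{\lambda>0:\int_\Omega\int_\Omega\phi(\frac{|u(x)-u(y)|}{\lambda|x-y|^{\alpha}})\frac{dx\,dy}{|x-y|^{2n}}\le1\}$. $L^\phi(\Omega)$ consists of measurable $u$ with $\|u\|_{L^\phi(\Omega)}:=\inf\{\lambda>0:\int_\Omega\phi(|u|/\lambda)\,dx\le1\}<\infty$, and $\mathbf B^{\alpha,\phi}(\Omega):=L^\phi(\Omega)\cap\dot{\mathbf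 B}^{\alpha,\phi}(\Omega)$. *)

theory Defs
  imports "HOL-Analysis.Analysis"
begin

definition young_function :: "(real \<Rightarrow> real) \<Rightarrow> bool" where
  "young_function \<phi> \<longleftrightarrow>
     continuous_on {0..} \<phi> \<and> convex_on {0..} \<phi> \<and> \<phi> 0 = 0 \<and>
     (\<forall>t>0. \<phi> t > 0) \<and> filterlim \<phi> at_top at_top"

definition Lambda_lower :: "nat \<Rightarrow> (real \<Rightarrow> real) \<Rightarrow> real \<Rightarrow> ennreal" where
  "Lambda_lower n \<phi> \<alpha> =
     (SUP x\<in>{0<..}. \<integral>\<^sup>+ t\<in>{0<..1}.
        ennreal (\<phi> (t powr (1 - \<alpha>) * x) / \<phi> x / t powr (real n + 1)) \<partial>lborel)"

definition Lambda_upper :: "nat \<Rightarrow> (real \<Rightarrow> real) \<Rightarrow> real \<Rightarrow> ennreal" where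
  "Lambda_upper n \<phi> \<alpha> =
     (SUP x\<in>{0<..}. \<integral>\<^sup>+ t\<in>{1..}.
        ennreal (\<phi> (t powr (- \<alpha>) * x) / \<phi> x / t powr (real n + 1)) \<partial>lborel)"

definition besov_modular ::
  "real \<Rightarrow> (real \<Rightarrow> real) \<Rightarrow> ('a::euclidean_space) set \<Rightarrow> ('a \<Rightarrow> real) \<Rightarrow> real \<Rightarrow> ennreal" where
  "besov_modular \<alpha> \<phi> \<Omega> u s =
     (\<integral>\<^sup>+ x\<in>\<Omega>. \<integral>\<^sup>+ y\<in>\<Omega>.
        ennreal (\<phi> (\<bar>u x - u y\<bar> / (s * dist x y powr \<alpha>)) / dist x y ^ (2 * DIM('a)))
      \<partial>lebesgue \<partial>lebesgue)"

definition besov_seminorm ::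
  "real \<Rightarrow> (real \<Rightarrow> real) \<Rightarrow> ('a::euclidean_space) set \<Rightarrow> ('a \<Rightarrow> real) \<Rightarrow> ereal" where
  "besov_seminorm \<alpha> \<phi> \<Omega> u = (INF s\<in>{s. s > 0 \<and> besov_modular \<alpha> \<phi> \<Omega> u s \<le> 1}. ereal s)"

definition dot_besov :: "real \<Rightarrow> (real \<Rightarrow> real) \<Rightarrow> ('a::euclidean_space) set \<Rightarrow> ('a \<Rightarrow> real) set" where
  "dot_besov \<alpha> \<phi> \<Omega> =
     {u. u \<in> borel_measurable (lebesgue_on \<Omega>) \<and> besov_seminorm \<alpha> \<phi> \<Omega> u < \<infinity>}"

definition orlicz_norm :: "(real \<Rightarrow> real) \<Rightarrow> ('a::euclidean_space) set \<Rightarrow> ('a \<Rightarrow> real) \<Rightarrow> ereal" where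
  "orlicz_norm \<phi> \<Omega> u =
     (INF s\<in>{s. s > 0 \<and> (\<integral>\<^sup>+ x\<in>\<Omega>. ennreal (\<phi> (\<bar>u x\<bar> / s)) \<partial>lebesgue) \<le> 1}. ereal s)"

definition orlicz_space :: "(real \<Rightarrow> real) \<Rightarrow> ('a::euclidean_space) set \<Rightarrow> ('a \<Rightarrow> real) set" where
  "orlicz_space \<phi> \<Omega> =
     {u. u \<in> borel_measurable (lebesgue_on \<Omega>) \<and> orlicz_norm \<phi> \<Omega> u < \<infinity>}"

definition besov :: "real \<Rightarrow> (real \<Rightarrow> real) \<Rightarrow> ('a::euclidean_space) set \<Rightarrow> ('a \<Rightarrow> real) set" where
  "besov \<alpha> \<phi> \<Omega> = orlicz_space \<phi> \<Omega> \<inter> dot_besov \<alpha> \<phi> \<Omega>"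

definition C1c :: "('a::euclidean_space) set \<Rightarrow> ('a \<Rightarrow> real) set" where
  "C1c \<Omega> = {u. (\<exists>D :: 'a \<Rightarrow> 'a \<Rightarrow>\<^sub>L real.
                   (\<forall>x\<in>\<Omega>. (u has_derivative blinfun_apply (D x)) (at x)) \<and> continuous_on \<Omega> D) \<and>
               compact (closure {x\<in>\<Omega>. u x \<noteq> 0}) \<and> closure {x\<in>\<Omega>. u x \<noteq> 0} \<subseteq> \<Omega>}"

end

theory Submission
  imports Defs
begin

text \<open>
  A function u in C^1_c(Omega) is bounded by some M, is L-Lipschitz on Omega and vanishes off a
  compact set K in Omega. For d = |x - y| and s >= 1, convexity of phi bounds the Besov integrand by
  1/s times phi(L d^(1-alpha)) / d^(2n) if d <= 1 and phi(2M d^(-alpha)) / d^(2n) if d > 1, and the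
  integrand vanishes unless x or y lies in K. Translation invariance and polar coordinates reduce the
  double integral of this majorant to 2 |K| n omega_n times a one-dimensional integral, whose parts over
  (0,1] and (1,oo) are at most phi(L) times the lower and phi(2M) times the upper Lambda index; for
  bounded Omega only distances up to diam Omega occur and the upper index is not needed. So the
  modular at scale s is O(1/s) and drops below 1 for large s; likewise the Orlicz modular is at most
  phi(M) |K| / s.
\<close>

section \<open>Young functions\<close>

lemma young_function_zero: "young_function \<phi> \<Longrightarrow> \<phi> 0 = 0"
  by (simp add: young_function_def)

lemma young_function_pos: "young_function \<phi> \<Longrightarrow> 0 < t \<Longrightarrow> 0 < \<phi> t"
  by (simp add: young_function_def)

lemma young_function_nonneg: "young_function \<phi> \<Longrightarrow> 0 \<le> t \<Longrightarrow> 0 \<le> \<phi> t"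
  by (cases "t = 0") (auto simp: young_function_zero less_imp_le young_function_pos)

lemma young_function_mult_le:
  assumes "young_function \<phi>" "0 \<le> l" "l \<le> 1" "0 \<le> t"
  shows "\<phi> (l * t) \<le> l * \<phi> t"
proof -
  have "convex_on {0..} \<phi>" using assms(1) by (simp add: young_function_def)
  then have "\<phi> ((1 - l) *\<^sub>R 0 + l *\<^sub>R t) \<le> (1 - l) * \<phi> 0 + l * \<phi> t"
    using assms(2-4) by (intro convex_onD) auto
  then show ?thesis using young_function_zero[OF assms(1)] by simp
qed

lemma young_function_mono:
  assumes "young_function \<phi>" "0 \<le> a" "a \<le> b"
  shows "\<phi> a \<le> \<phi> b"
proof (cases "b = 0")
  case False
  then have "0 < b" using assms by simp
  then have "\<phi> ((a / b) * b) \<le> (a / b) * \<phi> b"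
    using assms by (intro young_function_mult_le) auto
  also have "\<dots> \<le> \<phi> b"
    using \<open>0 < b\<close> assms young_function_nonneg[OF assms(1), of b]
    by (intro mult_left_le_one_le) auto
  finally show ?thesis using \<open>0 < b\<close> by simp
qed (use assms in simp)

lemma young_function_divide_le:
  "young_function \<phi> \<Longrightarrow> 1 \<le> s \<Longrightarrow> 0 \<le> t \<Longrightarrow> \<phi> (t / s) \<le> \<phi> t / s"
  using young_function_mult_le[of \<phi> "1 / s" t] by simp

lemma borel_measurable_young_function:
  assumes "young_function \<phi>" "f \<in> borel_measurable M" "\<And>x. x \<in> space M \<Longrightarrow> 0 \<le> f x"
  shows "(\<lambda>x. \<phi> (f x)) \<in> borel_measurable M"
proof -
  have "continuous_on {0..} \<phi>" using assms(1) by (simp add: young_function_def)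
  then have "continuous_on UNIV (\<lambda>t. \<phi> (max 0 t))"
    by (rule continuous_on_compose2) (auto intro: continuous_intros)
  then have "(\<lambda>x. \<phi> (max 0 (f x))) \<in> borel_measurable M"
    using measurable_compose[OF assms(2) borel_measurable_continuous_onI] by blast
  moreover have "\<phi> (max 0 (f x)) = \<phi> (f x)" if "x \<in> space M" for x
    using assms(3)[OF that] by simp
  ultimately show ?thesis by (simp cong: measurable_cong)
qed

section \<open>Polar coordinates\<close>

lemma measure_eqI_Ioc:
  fixes M N :: "real measure"
  assumes sets: "sets M = sets borel" "sets N = sets borel"
    and fin: "\<And>a b. emeasure M {a<..b} < \<infinity>"
    and eq: "\<And>a b. a < b \<Longrightarrow> emeasure M {a<..b} = emeasure N {a<..b}"
  shows "M = N"
proof (rule measure_eqI_generator_eq[where E = "range (\<lambda>(a, b). {a<..b})"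
      and A = "\<lambda>i. {- real i<..real i}" and \<Omega> = UNIV])
  show "Int_stable (range (\<lambda>(a, b). {a<..b::real}))"
    unfolding Int_stable_def
  proof (intro ballI)
    fix A B assume "A \<in> range (\<lambda>(a, b). {a<..b::real})" "B \<in> range (\<lambda>(a, b). {a<..b::real})"
    then obtain a b c d where "A = {a<..b}" "B = {c<..d}" by auto
    then have "A \<inter> B = {max a c<..min b d}" by auto
    then show "A \<inter> B \<in> range (\<lambda>(a, b). {a<..b::real})"
      by (auto intro!: image_eqI[where x="(max a c, min b d)"])
  qed
  show "sets M = sigma_sets UNIV (range (\<lambda>(a, b). {a<..b::real}))"
    "sets N = sigma_sets UNIV (range (\<lambda>(a, b). {a<..b::real}))"
    unfolding sets borel_sigma_sets_Ioc by (simp_all add: sets_measure_of)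
  show "(\<Union>i. {- real i<..real i}) = UNIV"
  proof safe
    fix x :: real
    obtain i :: nat where "\<bar>x\<bar> < real i" using reals_Archimedean2 by blast
    then have "x \<in> {- real i<..real i}" by auto
    then show "x \<in> (\<Union>i. {- real i<..real i})" by blast
  qed auto
  fix X assume "X \<in> range (\<lambda>(a, b). {a<..b::real})"
  then obtain a b where X: "X = {a<..b}" by auto
  show "emeasure M X = emeasure N X"
    unfolding X by (cases "a < b") (auto intro: eq)
next
  show "range (\<lambda>(a, b). {a<..b::real}) \<subseteq> Pow UNIV" by simp
  show "range (\<lambda>i. {- real i<..real i}) \<subseteq> range (\<lambda>(a, b). {a<..b::real})" by auto
  show "emeasure M {- real i<..real i} \<noteq> \<infinity>" for i
    using fin by (simp add: less_top)
qed

lemma emeasure_lborel_norm_le: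
  "emeasure lborel {z::'a::euclidean_space. norm z \<le> r}
     = ennreal (measure lborel (ball (0::'a) 1) * max 0 r ^ DIM('a))"
proof (cases "r < 0")
  case True
  have "\<not> norm z \<le> r" for z :: 'a using True norm_ge_zero[of z] by linarith
  then have "{z::'a. norm z \<le> r} = {}" by blast
  then show ?thesis using True by simp
next
  case False
  have "{z::'a. norm z \<le> r} = cball 0 r" by auto
  moreover have "emeasure lborel (cball (0::'a) r) = ennreal (measure lborel (cball (0::'a) r))"
    using emeasure_lborel_cball_finite[of "0::'a" r] by (simp add: emeasure_eq_ennreal_measure)
  moreover have "measure lborel (cball (0::'a) r) = r ^ DIM('a) * measure lborel (ball (0::'a) 1)"
    using False content_ball_conv_unit_ball[of r "0::'a"] by (simp add: content_cball_conv_ball)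
  ultimately show ?thesis using False by (simp add: mult.commute)
qed

lemma emeasure_distr_norm_Ioc:
  fixes a b :: real
  assumes "a \<le> b"
  defines "\<omega> \<equiv> measure lborel (ball (0::'a::euclidean_space) 1)"
  shows "emeasure (distr (lborel::'a measure) borel norm) {a<..b}
           = ennreal (\<omega> * max 0 b ^ DIM('a) - \<omega> * max 0 a ^ DIM('a))"
proof -
  have "emeasure (distr (lborel::'a measure) borel norm) {a<..b}
      = emeasure lborel ({z::'a. norm z \<le> b} - {z. norm z \<le> a})"
    by (subst emeasure_distr) (auto intro!: arg_cong[where f = "emeasure lborel"])
  also have "\<dots> = emeasure lborel {z::'a. norm z \<le> b} - emeasure lborel {z::'a. norm z \<le> a}"
    using assms(1) by (intro emeasure_Diff) (auto simp: emeasure_lborel_norm_le)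
  also have "\<dots> = ennreal (\<omega> * max 0 b ^ DIM('a) - \<omega> * max 0 a ^ DIM('a))"
    by (simp add: emeasure_lborel_norm_le ennreal_minus \<omega>_def)
  finally show ?thesis .
qed

lemma nn_integral_radial_density_Ioc:
  fixes a b :: real and n :: nat and \<omega> :: real
  assumes "a \<le> b" "0 < n" "0 \<le> \<omega>"
  shows "(\<integral>\<^sup>+r. ennreal (n * \<omega> * r ^ (n - 1)) * indicator {0<..} r * indicator {a<..b} r \<partial>lborel)
           = ennreal (\<omega> * max 0 b ^ n - \<omega> * max 0 a ^ n)"
proof -
  define c d where "c = max 0 a" and "d = max 0 b"
  have "(\<integral>\<^sup>+r. ennreal (n * \<omega> * r ^ (n - 1)) * indicator {0<..} r * indicator {a<..b} r \<partial>lborel)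
      = (\<integral>\<^sup>+r. ennreal (n * \<omega> * r ^ (n - 1)) * indicator {c..d} r \<partial>lborel)"
  proof (rule nn_integral_cong_AE)
    have same_support: "r \<in> {0<..} \<inter> {a<..b} \<longleftrightarrow> r \<in> {c..d}" if "r \<noteq> c" for r
      using that assms(1) by (auto simp: c_def d_def)
    show "AE r in lborel. ennreal (n * \<omega> * r ^ (n - 1)) * indicator {0<..} r * indicator {a<..b} r
        = ennreal (n * \<omega> * r ^ (n - 1)) * indicator {c..d} r"
      using AE_lborel_singleton[of c] by eventually_elim (use same_support in \<open>auto simp: indicator_def\<close>)
  qed
  also have "\<dots> = ennreal (\<omega> * d ^ n - \<omega> * c ^ n)"
  proof (rule nn_integral_FTC_Icc)
    show "c \<le> d" using assms(1) by (simp add: c_def d_def)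
    fix r assume "r \<in> {c..d}"
    then have "0 \<le> r" by (simp add: c_def)
    then show "0 \<le> n * \<omega> * r ^ (n - 1)" using assms(3) by simp
    show "((\<lambda>r. \<omega> * r ^ n) has_real_derivative n * \<omega> * r ^ (n - 1)) (at r)"
      by (auto intro!: derivative_eq_intros)
  qed simp
  finally show ?thesis by (simp add: c_def d_def)
qed

lemma distr_norm_lborel:
  defines "\<omega> \<equiv> measure lborel (ball (0::'a::euclidean_space) 1)"
  shows "distr (lborel::'a measure) borel norm
           = density lborel (\<lambda>r. ennreal (real DIM('a) * \<omega> * r ^ (DIM('a) - 1)) * indicator {0<..} r)"
proof (rule measure_eqI_Ioc)
  fix a b :: real
  show "emeasure (distr (lborel::'a measure) borel norm) {a<..b} < \<infinity>"
    by (cases "a \<le> b") (simp_all add: emeasure_distr_norm_Ioc)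
  assume "a < b"
  then show "emeasure (distr (lborel::'a measure) borel norm) {a<..b} =
      emeasure (density lborel (\<lambda>r. ennreal (real DIM('a) * \<omega> * r ^ (DIM('a) - 1)) * indicator {0<..} r)) {a<..b}"
    using nn_integral_radial_density_Ioc[of a b "DIM('a)" \<omega>]
    by (simp add: emeasure_distr_norm_Ioc emeasure_density \<omega>_def)
qed simp_all

lemma nn_integral_radial:
  fixes g :: "real \<Rightarrow> ennreal"
  assumes [measurable]: "g \<in> borel_measurable borel"
  defines "\<omega> \<equiv> measure lborel (ball (0::'a::euclidean_space) 1)"
  shows "(\<integral>\<^sup>+z. g (norm z) \<partial>(lborel::'a measure))
           = (\<integral>\<^sup>+r\<in>{0<..}. ennreal (real DIM('a) * \<omega> * r ^ (DIM('a) - 1)) * g r \<partial>lborel)"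
proof -
  have "(\<integral>\<^sup>+z. g (norm z) \<partial>(lborel::'a measure)) = (\<integral>\<^sup>+r. g r \<partial>distr (lborel::'a measure) borel norm)"
    by (simp add: nn_integral_distr)
  also have "\<dots> = (\<integral>\<^sup>+r\<in>{0<..}. ennreal (real DIM('a) * \<omega> * r ^ (DIM('a) - 1)) * g r \<partial>lborel)"
    unfolding distr_norm_lborel \<omega>_def by (simp add: nn_integral_density mult_ac)
  finally show ?thesis .
qed

section \<open>A radial majorant of the Besov integrand\<close>

text \<open>
  For a function with Lipschitz constant L and oscillation at most M, besov_profile phi alpha n L M R d / s
  bounds the Besov integrand at scale s >= 1 on pairs at distance d <= R: the Lipschitz bound is used
  for d <= 1, the oscillation bound beyond.
\<close>

definition besov_profile :: "(real \<Rightarrow> real) \<Rightarrow> real \<Rightarrow> nat \<Rightarrow> real \<Rightarrow> real \<Rightarrow> ereal \<Rightarrow> real \<Rightarrow> real" where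
  "besov_profile \<phi> \<alpha> n L M R r =
     (if r \<le> 1 then \<phi> (L * r powr (1 - \<alpha>)) else if ereal r \<le> R then \<phi> (M * r powr (- \<alpha>)) else 0)
       / r ^ (2 * n)"

lemma besov_profile_nonneg:
  assumes "young_function \<phi>" "0 \<le> L" "0 \<le> M"
  shows "0 \<le> besov_profile \<phi> \<alpha> n L M R r"
proof -
  have "0 \<le> r ^ (2 * n)" by (simp add: power_mult)
  moreover have "0 \<le> \<phi> (L * r powr (1 - \<alpha>))" "0 \<le> \<phi> (M * r powr (- \<alpha>))"
    using assms by (simp_all add: young_function_nonneg)
  ultimately show ?thesis unfolding besov_profile_def by simp
qed

lemma borel_measurable_besov_profile [measurable]:
  assumes "young_function \<phi>" "0 \<le> L" "0 \<le> M"
  shows "besov_profile \<phi> \<alpha> n L M R \<in> borel_measurable borel"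
proof -
  have [measurable]: "(\<lambda>r. \<phi> (L * r powr (1 - \<alpha>))) \<in> borel_measurable borel"
    "(\<lambda>r. \<phi> (M * r powr (- \<alpha>))) \<in> borel_measurable borel"
    using assms by (auto intro!: borel_measurable_young_function[OF assms(1)])
  show ?thesis unfolding besov_profile_def by measurable
qed

lemma power_divide_power_eq_inverse_powr:
  fixes r :: real
  assumes "0 < r" "0 < n"
  shows "r ^ (n - 1) / r ^ (2 * n) = 1 / r powr (real n + 1)"
proof -
  have "2 * n = (n - 1) + (n + 1)" using assms(2) by simp
  then have "r ^ (2 * n) = r ^ (n - 1) * r ^ (n + 1)" by (metis power_add)
  moreover have "r powr (real n + 1) = r ^ (n + 1)"
    using assms(1) powr_realpow[of r "n + 1"] by (simp add: add.commute)
  ultimately show ?thesis using assms(1) by simp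
qed

lemma nn_integral_besov_profile_near_le:
  assumes "young_function \<phi>" "0 < L" "0 < n"
  shows "(\<integral>\<^sup>+r\<in>{0<..1}. ennreal (r ^ (n - 1) * besov_profile \<phi> \<alpha> n L M R r) \<partial>lborel)
           \<le> ennreal (\<phi> L) * Lambda_lower n \<phi> \<alpha>"
proof -
  have "0 < \<phi> L" using assms by (simp add: young_function_pos)
  have [measurable]: "(\<lambda>r. \<phi> (r powr (1 - \<alpha>) * L)) \<in> borel_measurable borel"
    using assms by (intro borel_measurable_young_function[OF assms(1)]) auto
  have "(\<integral>\<^sup>+r\<in>{0<..1}. ennreal (r ^ (n - 1) * besov_profile \<phi> \<alpha> n L M R r) \<partial>lborel)
      = (\<integral>\<^sup>+r\<in>{0<..1}. ennreal (\<phi> L) * ennreal (\<phi> (r powr (1 - \<alpha>) * L) / \<phi> L / r powr (real n + 1)) \<partial>lborel)"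
  proof (rule nn_integral_cong)
    fix r :: real
    show "ennreal (r ^ (n - 1) * besov_profile \<phi> \<alpha> n L M R r) * indicator {0<..1} r
        = ennreal (\<phi> L) * ennreal (\<phi> (r powr (1 - \<alpha>) * L) / \<phi> L / r powr (real n + 1)) * indicator {0<..1} r"
    proof (cases "r \<in> {0<..1}")
      case True
      then have "r ^ (n - 1) * besov_profile \<phi> \<alpha> n L M R r
          = \<phi> (L * r powr (1 - \<alpha>)) * (r ^ (n - 1) / r ^ (2 * n))"
        by (simp add: besov_profile_def)
      also have "\<dots> = \<phi> (L * r powr (1 - \<alpha>)) * (1 / r powr (real n + 1))"
        using True assms(3) by (subst power_divide_power_eq_inverse_powr) auto
      also have "\<dots> = \<phi> L * (\<phi> (r powr (1 - \<alpha>) * L) / \<phi> L / r powr (real n + 1))"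
        using \<open>0 < \<phi> L\<close> by (simp add: mult.commute)
      finally have "r ^ (n - 1) * besov_profile \<phi> \<alpha> n L M R r
          = \<phi> L * (\<phi> (r powr (1 - \<alpha>) * L) / \<phi> L / r powr (real n + 1))" .
      with True \<open>0 < \<phi> L\<close> assms show ?thesis
        by (simp add: ennreal_mult[symmetric] young_function_nonneg)
    qed simp
  qed
  also have "\<dots> = ennreal (\<phi> L) * (\<integral>\<^sup>+r\<in>{0<..1}. ennreal (\<phi> (r powr (1 - \<alpha>) * L) / \<phi> L / r powr (real n + 1)) \<partial>lborel)"
    by (subst nn_integral_cmult[symmetric]) (auto simp: mult.assoc)
  also have "\<dots> \<le> ennreal (\<phi> L) * Lambda_lower n \<phi> \<alpha>"
    unfolding Lambda_lower_def using assms(2) by (intro mult_left_mono SUP_upper) auto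
  finally show ?thesis .
qed

lemma nn_integral_besov_profile_far_le:
  assumes "young_function \<phi>" "0 < M" "0 < n"
  shows "(\<integral>\<^sup>+r\<in>{1<..}. ennreal (r ^ (n - 1) * besov_profile \<phi> \<alpha> n L M R r) \<partial>lborel)
           \<le> ennreal (\<phi> M) * Lambda_upper n \<phi> \<alpha>"
proof -
  have "0 < \<phi> M" using assms by (simp add: young_function_pos)
  have [measurable]: "(\<lambda>r. \<phi> (r powr (- \<alpha>) * M)) \<in> borel_measurable borel"
    using assms by (intro borel_measurable_young_function[OF assms(1)]) auto
  have "(\<integral>\<^sup>+r\<in>{1<..}. ennreal (r ^ (n - 1) * besov_profile \<phi> \<alpha> n L M R r) \<partial>lborel)
      \<le> (\<integral>\<^sup>+r\<in>{1..}. ennreal (\<phi> M) * ennreal (\<phi> (r powr (- \<alpha>) * M) / \<phi> M / r powr (real n + 1)) \<partial>lborel)"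
  proof (rule nn_integral_mono)
    fix r :: real
    show "ennreal (r ^ (n - 1) * besov_profile \<phi> \<alpha> n L M R r) * indicator {1<..} r
        \<le> ennreal (\<phi> M) * ennreal (\<phi> (r powr (- \<alpha>) * M) / \<phi> M / r powr (real n + 1)) * indicator {1..} r"
    proof (cases "1 < r")
      case True
      have "0 \<le> \<phi> (M * r powr (- \<alpha>))" "0 \<le> \<phi> (r powr (- \<alpha>) * M)"
        using assms by (simp_all add: young_function_nonneg)
      then have "r ^ (n - 1) * besov_profile \<phi> \<alpha> n L M R r \<le> \<phi> (M * r powr (- \<alpha>)) * (r ^ (n - 1) / r ^ (2 * n))"
        using True by (auto simp: besov_profile_def mult.commute)
      also have "\<dots> = \<phi> M * (\<phi> (r powr (- \<alpha>) * M) / \<phi> M / r powr (real n + 1))"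
        using True assms(3) \<open>0 < \<phi> M\<close>
        by (subst power_divide_power_eq_inverse_powr) (auto simp: mult.commute)
      finally show ?thesis
        using True \<open>0 < \<phi> M\<close> \<open>0 \<le> \<phi> (r powr (- \<alpha>) * M)\<close>
        by (simp add: ennreal_mult[symmetric] ennreal_leI)
    qed simp
  qed
  also have "\<dots> = ennreal (\<phi> M) * (\<integral>\<^sup>+r\<in>{1..}. ennreal (\<phi> (r powr (- \<alpha>) * M) / \<phi> M / r powr (real n + 1)) \<partial>lborel)"
    by (subst nn_integral_cmult[symmetric]) (auto simp: mult.assoc)
  also have "\<dots> \<le> ennreal (\<phi> M) * Lambda_upper n \<phi> \<alpha>"
    unfolding Lambda_upper_def using assms(2) by (intro mult_left_mono SUP_upper) auto
  finally show ?thesis .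
qed

lemma nn_integral_besov_profile_far_finite:
  assumes "young_function \<phi>" "0 \<le> M" "\<alpha> \<le> 0" "R < \<infinity>"
  shows "(\<integral>\<^sup>+r\<in>{1<..}. ennreal (r ^ (n - 1) * besov_profile \<phi> \<alpha> n L M R r) \<partial>lborel) < \<infinity>"
proof -
  define D where "D = real_of_ereal R"
  define c where "c = \<phi> (M * D powr (- \<alpha>))"
  have "(\<integral>\<^sup>+r\<in>{1<..}. ennreal (r ^ (n - 1) * besov_profile \<phi> \<alpha> n L M R r) \<partial>lborel)
      \<le> (\<integral>\<^sup>+r. ennreal c * indicator {1..D} r \<partial>lborel)"
  proof (rule nn_integral_mono)
    fix r :: real
    show "ennreal (r ^ (n - 1) * besov_profile \<phi> \<alpha> n L M R r) * indicator {1<..} r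
        \<le> ennreal c * indicator {1..D} r"
    proof (cases "1 < r \<and> ereal r \<le> R")
      case True
      then have "r \<le> D" using assms(4) by (cases R) (auto simp: D_def)
      have "r ^ (n - 1) \<le> r ^ (2 * n)" using True by (intro power_increasing) auto
      then have "r ^ (n - 1) / r ^ (2 * n) \<le> 1" using True by simp
      moreover have "0 \<le> \<phi> (M * r powr (- \<alpha>))" using assms by (simp add: young_function_nonneg)
      ultimately have "r ^ (n - 1) * besov_profile \<phi> \<alpha> n L M R r \<le> \<phi> (M * r powr (- \<alpha>))"
        using True mult_left_le[of "r ^ (n - 1) / r ^ (2 * n)" "\<phi> (M * r powr (- \<alpha>))"]
        by (simp add: besov_profile_def mult.commute)
      also have "\<dots> \<le> c"
      proof -
        have "M * r powr (- \<alpha>) \<le> M * D powr (- \<alpha>)"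
          using True \<open>r \<le> D\<close> assms by (intro mult_left_mono powr_mono2) auto
        then show ?thesis unfolding c_def using assms(1,2) by (simp add: young_function_mono)
      qed
      finally show ?thesis using True \<open>r \<le> D\<close> by (simp add: ennreal_leI)
    next
      case False
      then have "1 < r \<Longrightarrow> besov_profile \<phi> \<alpha> n L M R r = 0"
        by (simp add: besov_profile_def)
      then show ?thesis by (cases "1 < r") auto
    qed
  qed
  also have "\<dots> = ennreal c * emeasure lborel {1..D}" by (rule nn_integral_cmult_indicator) simp
  also have "\<dots> < \<infinity>" by (simp add: ennreal_mult_less_top emeasure_lborel_Icc_eq)
  finally show ?thesis .
qed

lemma nn_integral_besov_profile_finite:
  assumes "young_function \<phi>" "0 < L" "0 < M" "\<alpha> \<le> 0"
    and "Lambda_lower DIM('a) \<phi> \<alpha> < \<infinity>" and "R = \<infinity> \<Longrightarrow> Lambda_upper DIM('a) \<phi> \<alpha> < \<infinity>"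
  shows "(\<integral>\<^sup>+z. ennreal (besov_profile \<phi> \<alpha> DIM('a) L M R (norm z)) \<partial>(lborel::'a::euclidean_space measure)) < \<infinity>"
proof -
  let ?n = "DIM('a)" and ?\<omega> = "measure lborel (ball (0::'a) 1)"
  let ?f = "\<lambda>r. ennreal (r ^ (?n - 1) * besov_profile \<phi> \<alpha> ?n L M R r)"
  have [measurable]: "besov_profile \<phi> \<alpha> ?n L M R \<in> borel_measurable borel"
    using assms by simp
  have "(\<integral>\<^sup>+z. ennreal (besov_profile \<phi> \<alpha> ?n L M R (norm z)) \<partial>(lborel::'a measure))
      = (\<integral>\<^sup>+r\<in>{0<..}. ennreal (?n * ?\<omega>) * ?f r \<partial>lborel)"
  proof (subst nn_integral_radial, measurable, intro nn_integral_cong)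
    fix r :: real
    have "0 \<le> besov_profile \<phi> \<alpha> ?n L M R r" using assms by (simp add: besov_profile_nonneg)
    then show "ennreal (?n * ?\<omega> * r ^ (?n - 1)) * ennreal (besov_profile \<phi> \<alpha> ?n L M R r) * indicator {0<..} r
        = ennreal (?n * ?\<omega>) * ?f r * indicator {0<..} r"
      by (cases "0 < r") (simp_all add: ennreal_mult[symmetric] mult.assoc)
  qed
  also have "\<dots> = ennreal (?n * ?\<omega>) * (\<integral>\<^sup>+r\<in>{0<..1} \<union> {1<..}. ?f r \<partial>lborel)"
  proof -
    have "{0<..} = {0<..1::real} \<union> {1<..}" by auto
    then show ?thesis by (subst nn_integral_cmult[symmetric]) (auto simp: mult.assoc)
  qed
  also have "\<dots> = ennreal (?n * ?\<omega>) * ((\<integral>\<^sup>+r\<in>{0<..1}. ?f r \<partial>lborel) + (\<integral>\<^sup>+r\<in>{1<..}. ?f r \<partial>lborel))"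
    by (subst nn_integral_disjoint_pair) auto
  also have "\<dots> < \<infinity>"
  proof -
    have "(\<integral>\<^sup>+r\<in>{0<..1}. ?f r \<partial>lborel) < \<infinity>"
      using nn_integral_besov_profile_near_le[OF assms(1,2), of ?n \<alpha> M R] assms(5)
      by (auto simp: ennreal_mult_less_top intro: order.strict_trans1)
    moreover have "(\<integral>\<^sup>+r\<in>{1<..}. ?f r \<partial>lborel) < \<infinity>"
    proof (cases "R = \<infinity>")
      case True
      then show ?thesis
        using nn_integral_besov_profile_far_le[OF assms(1,3), of ?n \<alpha> L R] assms(6)
        by (auto simp: ennreal_mult_less_top intro: order.strict_trans1)
    next
      case False
      then show ?thesis
        using assms by (intro nn_integral_besov_profile_far_finite) (auto simp: less_top)
    qed
    ultimately show ?thesis by (simp add: ennreal_mult_less_top)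
  qed
  finally show ?thesis .
qed

lemma besov_integrand_le_profile:
  fixes a b d :: real
  assumes "young_function \<phi>" "1 \<le> s" "0 \<le> d" "\<bar>a - b\<bar> \<le> L * d" "\<bar>a\<bar> \<le> M" "\<bar>b\<bar> \<le> M"
    and "ereal d \<le> R"
  shows "\<phi> (\<bar>a - b\<bar> / (s * d powr \<alpha>)) / d ^ (2 * n) \<le> besov_profile \<phi> \<alpha> n L (2 * M) R d / s"
proof (cases "d = 0")
  case True
  then show ?thesis using assms(1) by (simp add: young_function_zero besov_profile_def)
next
  case False
  then have "0 < d" using assms(3) by simp
  define t where "t = \<bar>a - b\<bar> / d powr \<alpha>"
  define T where "T = (if d \<le> 1 then L * d powr (1 - \<alpha>) else 2 * M * d powr (- \<alpha>))"
  have "0 \<le> t" by (simp add: t_def)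
  have "t \<le> T"
  proof (cases "d \<le> 1")
    case True
    have "t \<le> L * d / d powr \<alpha>" unfolding t_def using assms(4) by (simp add: divide_right_mono)
    also have "\<dots> = L * d powr (1 - \<alpha>)" using \<open>0 < d\<close> by (simp add: powr_diff)
    finally show ?thesis using True by (simp add: T_def)
  next
    case False
    have "t \<le> 2 * M / d powr \<alpha>" unfolding t_def using assms(5,6) by (simp add: divide_right_mono)
    also have "\<dots> = 2 * M * d powr (- \<alpha>)" using \<open>0 < d\<close> by (simp add: powr_minus divide_inverse)
    finally show ?thesis using False by (simp add: T_def)
  qed
  have "\<phi> (\<bar>a - b\<bar> / (s * d powr \<alpha>)) = \<phi> (t / s)" by (simp add: t_def mult.commute)
  also have "\<dots> \<le> \<phi> t / s" using assms(1,2) \<open>0 \<le> t\<close> by (rule young_function_divide_le)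
  also have "\<dots> \<le> \<phi> T / s"
    using assms(1,2) \<open>0 \<le> t\<close> \<open>t \<le> T\<close> by (simp add: divide_right_mono young_function_mono)
  finally have "\<phi> (\<bar>a - b\<bar> / (s * d powr \<alpha>)) / d ^ (2 * n) \<le> \<phi> T / s / d ^ (2 * n)"
    using \<open>0 < d\<close> by (intro divide_right_mono) auto
  also have "\<dots> = besov_profile \<phi> \<alpha> n L (2 * M) R d / s"
    using assms(7) by (simp add: besov_profile_def T_def)
  finally show ?thesis .
qed

lemma nn_integral_lborel_dist:
  fixes g :: "real \<Rightarrow> ennreal" and x :: "'a::euclidean_space"
  assumes [measurable]: "g \<in> borel_measurable borel"
  shows "(\<integral>\<^sup>+y. g (dist x y) \<partial>lborel) = (\<integral>\<^sup>+z. g (norm z) \<partial>(lborel::'a measure))"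
proof -
  have "(\<integral>\<^sup>+z. g (norm z) \<partial>(lborel::'a measure)) = (\<integral>\<^sup>+z. g (norm z) \<partial>distr lborel borel ((+) (- x)))"
    by (simp add: lborel_distr_plus)
  also have "\<dots> = (\<integral>\<^sup>+y. g (dist x y) \<partial>lborel)"
    by (subst nn_integral_distr) (auto simp: dist_norm norm_minus_commute)
  finally show ?thesis ..
qed

lemma nn_integral_pair_le_radial_kernel:
  fixes f :: "'a::euclidean_space \<Rightarrow> 'a \<Rightarrow> ennreal" and g :: "real \<Rightarrow> ennreal"
  assumes [measurable]: "K \<in> sets borel" "g \<in> borel_measurable borel"
    and f_le: "\<And>x y. x \<in> \<Omega> \<Longrightarrow> y \<in> \<Omega> \<Longrightarrow> f x y \<le> (indicator K x + indicator K y) * g (dist x y)"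
  shows "(\<integral>\<^sup>+x\<in>\<Omega>. \<integral>\<^sup>+y\<in>\<Omega>. f x y \<partial>lebesgue \<partial>lebesgue)
           \<le> 2 * emeasure lborel K * (\<integral>\<^sup>+z. g (norm z) \<partial>(lborel::'a measure))"
proof -
  define I where "I = (\<integral>\<^sup>+z. g (norm z) \<partial>(lborel::'a measure))"
  have dist_I: "(\<integral>\<^sup>+y. g (dist x y) \<partial>lborel) = I" "(\<integral>\<^sup>+y. g (dist y x) \<partial>lborel) = I" for x :: 'a
    unfolding I_def by (simp_all add: nn_integral_lborel_dist dist_commute[of _ x])
  define H where "H x y = (indicator K x + indicator K y) * g (dist x y)" for x y :: 'a
  have [measurable]: "(\<lambda>(x, y). H x y) \<in> borel_measurable (lborel \<Otimes>\<^sub>M lborel)"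
    unfolding H_def by measurable
  have "(\<integral>\<^sup>+x\<in>\<Omega>. \<integral>\<^sup>+y\<in>\<Omega>. f x y \<partial>lebesgue \<partial>lebesgue) \<le> (\<integral>\<^sup>+x. \<integral>\<^sup>+y. H x y \<partial>lebesgue \<partial>lebesgue)"
  proof (rule nn_integral_mono)
    fix x
    have "f x y * indicator \<Omega> y \<le> H x y" if "x \<in> \<Omega>" for y
      using that f_le by (cases "y \<in> \<Omega>") (simp_all add: H_def)
    then show "(\<integral>\<^sup>+y\<in>\<Omega>. f x y \<partial>lebesgue) * indicator \<Omega> x \<le> (\<integral>\<^sup>+y. H x y \<partial>lebesgue)"
      by (cases "x \<in> \<Omega>") (simp_all add: nn_integral_mono)
  qed
  also have "\<dots> = (\<integral>\<^sup>+x. \<integral>\<^sup>+y. H x y \<partial>lborel \<partial>lborel)"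
    by (simp add: nn_integral_completion)
  also have "\<dots> = (\<integral>\<^sup>+x. indicator K x * I \<partial>lborel) + (\<integral>\<^sup>+x. \<integral>\<^sup>+y. indicator K y * g (dist x y) \<partial>lborel \<partial>lborel)"
    by (simp add: H_def distrib_right nn_integral_add nn_integral_cmult dist_I)
  also have "(\<integral>\<^sup>+x. \<integral>\<^sup>+y. indicator K y * g (dist x y) \<partial>lborel \<partial>lborel)
      = (\<integral>\<^sup>+y. indicator K y * I \<partial>lborel)"
    by (subst lborel_pair.Fubini') (simp_all add: nn_integral_cmult dist_I)
  also have "(\<integral>\<^sup>+x. indicator K x * I \<partial>lborel) + (\<integral>\<^sup>+y. indicator K y * I \<partial>lborel)
      = 2 * emeasure lborel K * I"
    by (simp add: nn_integral_multc mult_2 distrib_right)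
  finally show ?thesis unfolding I_def .
qed

section \<open>Compactly supported \<open>C\<^sup>1\<close> functions\<close>

lemma C1c_continuous_on: "u \<in> C1c \<Omega> \<Longrightarrow> continuous_on \<Omega> u"
  unfolding C1c_def
  by (blast intro: continuous_at_imp_continuous_on has_derivative_continuous)

lemma C1c_bounded:
  assumes u: "u \<in> C1c \<Omega>"
  shows "bounded (u ` \<Omega>)"
proof -
  define K where "K = closure {x\<in>\<Omega>. u x \<noteq> 0}"
  have "compact K" "K \<subseteq> \<Omega>" using u unfolding C1c_def K_def by auto
  then have "bounded (u ` K)"
    using C1c_continuous_on[OF u] by (meson compact_continuous_image compact_imp_bounded continuous_on_subset)
  moreover have "u ` \<Omega> \<subseteq> insert 0 (u ` K)"
    unfolding K_def using closure_subset by fastforce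
  ultimately show ?thesis by (metis bounded_insert bounded_subset)
qed

lemma C1c_lipschitz:
  fixes u :: "'a::euclidean_space \<Rightarrow> real"
  assumes u: "u \<in> C1c \<Omega>" and "open \<Omega>"
  obtains L where "L-lipschitz_on \<Omega> u"
proof -
  define K where "K = closure {x\<in>\<Omega>. u x \<noteq> 0}"
  obtain D :: "'a \<Rightarrow> 'a \<Rightarrow>\<^sub>L real" where
    D: "\<And>x. x \<in> \<Omega> \<Longrightarrow> (u has_derivative blinfun_apply (D x)) (at x)" and "continuous_on \<Omega> D"
    and "compact K" "K \<subseteq> \<Omega>"
    using u unfolding C1c_def K_def by blast
  have "bounded (D ` K)"
    using \<open>continuous_on \<Omega> D\<close> \<open>compact K\<close> \<open>K \<subseteq> \<Omega>\<close>
    by (meson compact_continuous_image compact_imp_bounded continuous_on_subset)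
  then obtain B where B: "\<And>x. x \<in> K \<Longrightarrow> norm (D x) \<le> B"
    unfolding bounded_iff by blast
  \<comment> \<open>\<open>\<Omega>\<close> need not be convex, but the zero extension of \<open>u\<close> is differentiable on all of the
      space, with derivative vanishing off \<open>K\<close>, so the mean value inequality applies to it.\<close>
  define v where "v x = (if x \<in> \<Omega> then u x else 0)" for x
  have v_outside: "v x = 0" if "x \<notin> K" for x
    using that closure_subset[of "{x\<in>\<Omega>. u x \<noteq> 0}"] by (auto simp: v_def K_def)
  define D' where "D' x = (if x \<in> K then blinfun_apply (D x) else (\<lambda>_. 0))" for x
  have "(v has_derivative D' x) (at x)" for x
  proof (cases "x \<in> K")
    case True
    with \<open>K \<subseteq> \<Omega>\<close> have "x \<in> \<Omega>" by auto
    have "(v has_derivative blinfun_apply (D x)) (at x)"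
      by (rule has_derivative_transform_within_open[OF D[OF \<open>x \<in> \<Omega>\<close>] \<open>open \<Omega>\<close> \<open>x \<in> \<Omega>\<close>])
        (simp add: v_def)
    with True show ?thesis by (simp add: D'_def)
  next
    case False
    have "open (- K)" using \<open>compact K\<close> compact_imp_closed by blast
    then have "(v has_derivative (\<lambda>_. 0)) (at x)"
      using has_derivative_transform_within_open[of "\<lambda>_. 0" "\<lambda>_. 0" x UNIV "- K" v] False v_outside
      by auto
    with False show ?thesis by (simp add: D'_def)
  qed
  moreover have "onorm (D' x) \<le> max B 0" for x
    using B[of x] by (auto simp: D'_def norm_blinfun.rep_eq[symmetric] onorm_zero)
  ultimately have "norm (v x - v y) \<le> max B 0 * norm (x - y)" for x y
    by (intro differentiable_bound[of UNIV]) auto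
  then have "(max B 0)-lipschitz_on \<Omega> u"
    by (intro lipschitz_onI) (metis v_def dist_norm real_norm_def, simp)
  then show thesis by (rule that)
qed

lemma C1c_measurable:
  "open \<Omega> \<Longrightarrow> u \<in> C1c \<Omega> \<Longrightarrow> u \<in> borel_measurable (lebesgue_on \<Omega>)"
  by (intro continuous_imp_measurable_on_sets_lebesgue C1c_continuous_on) auto

section \<open>Finiteness of the modulars\<close>

lemma ex_scale_le_one:
  fixes F :: "real \<Rightarrow> ennreal"
  assumes "C < \<infinity>" and F_le: "\<And>s. 1 \<le> s \<Longrightarrow> F s \<le> ennreal (1 / s) * C"
  shows "\<exists>s>0. F s \<le> 1"
proof -
  obtain c where c: "C = ennreal c" "0 \<le> c" using assms(1) by (cases C rule: ennreal_cases) auto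
  define s where "s = max 1 c"
  have "F s \<le> ennreal (c / s)"
    using F_le[of s] c by (simp add: s_def ennreal_mult[symmetric])
  also have "\<dots> \<le> 1" using c by (simp add: s_def)
  finally show ?thesis by (intro exI[of _ s]) (simp add: s_def)
qed

lemma nn_integral_young_le_support:
  fixes u :: "'a::euclidean_space \<Rightarrow> real"
  assumes "young_function \<phi>" "1 \<le> s" "K \<in> sets borel"
    and bound: "\<And>x. x \<in> \<Omega> \<Longrightarrow> \<bar>u x\<bar> \<le> M" and support: "\<And>x. x \<in> \<Omega> \<Longrightarrow> x \<notin> K \<Longrightarrow> u x = 0"
  shows "(\<integral>\<^sup>+x\<in>\<Omega>. ennreal (\<phi> (\<bar>u x\<bar> / s)) \<partial>lebesgue) \<le> ennreal (\<phi> M / s) * emeasure lborel K"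
proof -
  have "(\<integral>\<^sup>+x\<in>\<Omega>. ennreal (\<phi> (\<bar>u x\<bar> / s)) \<partial>lebesgue) \<le> (\<integral>\<^sup>+x. ennreal (\<phi> M / s) * indicator K x \<partial>lborel)"
    unfolding nn_integral_completion
  proof (rule nn_integral_mono)
    fix x
    have "\<phi> (\<bar>u x\<bar> / s) \<le> \<phi> M / s" if "x \<in> \<Omega>"
    proof -
      have "\<phi> (\<bar>u x\<bar> / s) \<le> \<phi> \<bar>u x\<bar> / s" using assms(1,2) by (simp add: young_function_divide_le)
      also have "\<dots> \<le> \<phi> M / s"
        using assms(1,2) bound[OF that] by (simp add: divide_right_mono young_function_mono)
      finally show ?thesis .
    qed
    then show "ennreal (\<phi> (\<bar>u x\<bar> / s)) * indicator \<Omega> x \<le> ennreal (\<phi> M / s) * indicator K x"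
      using support[of x] assms(1) by (auto simp: indicator_def young_function_zero ennreal_leI)
  qed
  also have "\<dots> = ennreal (\<phi> M / s) * emeasure lborel K"
    using assms(3) by (simp add: nn_integral_cmult_indicator)
  finally show ?thesis .
qed

lemma besov_modular_le_profile:
  fixes u :: "'a::euclidean_space \<Rightarrow> real"
  assumes "young_function \<phi>" "1 \<le> s" "0 \<le> L" "0 \<le> M" and [measurable]: "K \<in> sets borel"
    and lip: "\<And>x y. x \<in> \<Omega> \<Longrightarrow> y \<in> \<Omega> \<Longrightarrow> \<bar>u x - u y\<bar> \<le> L * dist x y"
    and bound: "\<And>x. x \<in> \<Omega> \<Longrightarrow> \<bar>u x\<bar> \<le> M"
    and support: "\<And>x. x \<in> \<Omega> \<Longrightarrow> x \<notin> K \<Longrightarrow> u x = 0"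
    and dist_le: "\<And>x y. x \<in> \<Omega> \<Longrightarrow> y \<in> \<Omega> \<Longrightarrow> ereal (dist x y) \<le> R"
  shows "besov_modular \<alpha> \<phi> \<Omega> u s \<le> ennreal (1 / s) *
           (2 * emeasure lborel K * (\<integral>\<^sup>+z. ennreal (besov_profile \<phi> \<alpha> DIM('a) L (2 * M) R (norm z)) \<partial>(lborel::'a measure)))"
proof -
  define P where "P = besov_profile \<phi> \<alpha> DIM('a) L (2 * M) R"
  have P_nonneg: "0 \<le> P r" for r
    using assms(1,3,4) by (simp add: P_def besov_profile_nonneg)
  have [measurable]: "P \<in> borel_measurable borel"
    using assms(1,3,4) by (simp add: P_def)
  have "besov_modular \<alpha> \<phi> \<Omega> u s
      \<le> 2 * emeasure lborel K * (\<integral>\<^sup>+z. ennreal (1 / s) * ennreal (P (norm z)) \<partial>(lborel::'a measure))"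
    unfolding besov_modular_def
  proof (rule nn_integral_pair_le_radial_kernel)
    fix x y assume "x \<in> \<Omega>" "y \<in> \<Omega>"
    show "ennreal (\<phi> (\<bar>u x - u y\<bar> / (s * dist x y powr \<alpha>)) / dist x y ^ (2 * DIM('a)))
        \<le> (indicator K x + indicator K y) * (ennreal (1 / s) * ennreal (P (dist x y)))"
    proof (cases "x \<in> K \<or> y \<in> K")
      case True
      have "\<phi> (\<bar>u x - u y\<bar> / (s * dist x y powr \<alpha>)) / dist x y ^ (2 * DIM('a)) \<le> P (dist x y) / s"
        unfolding P_def using \<open>x \<in> \<Omega>\<close> \<open>y \<in> \<Omega>\<close>
        by (intro besov_integrand_le_profile[OF assms(1,2)] lip bound dist_le) auto
      then have "ennreal (\<phi> (\<bar>u x - u y\<bar> / (s * dist x y powr \<alpha>)) / dist x y ^ (2 * DIM('a)))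
          \<le> ennreal (1 / s) * ennreal (P (dist x y))"
        using assms(2) P_nonneg by (simp add: ennreal_mult[symmetric] ennreal_leI)
      also have "\<dots> \<le> (indicator K x + indicator K y) * (ennreal (1 / s) * ennreal (P (dist x y)))"
        using True mult_right_mono[of 1 "indicator K x + indicator K y :: ennreal"]
        by (auto simp: indicator_def)
      finally show ?thesis .
    next
      case False
      then show ?thesis
        using support \<open>x \<in> \<Omega>\<close> \<open>y \<in> \<Omega>\<close> assms(1) by (simp add: young_function_zero)
    qed
  qed measurable
  also have "(\<integral>\<^sup>+z. ennreal (1 / s) * ennreal (P (norm z)) \<partial>(lborel::'a measure))
      = ennreal (1 / s) * (\<integral>\<^sup>+z. ennreal (P (norm z)) \<partial>(lborel::'a measure))"
    by (rule nn_integral_cmult) measurable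
  finally show ?thesis by (simp add: P_def mult_ac)
qed

lemma C1c_orlicz_modular_le_one:
  fixes u :: "'a::euclidean_space \<Rightarrow> real"
  assumes "young_function \<phi>" "u \<in> C1c \<Omega>"
  shows "\<exists>s>0. (\<integral>\<^sup>+x\<in>\<Omega>. ennreal (\<phi> (\<bar>u x\<bar> / s)) \<partial>lebesgue) \<le> 1"
proof -
  define K where "K = closure {x\<in>\<Omega>. u x \<noteq> 0}"
  have "compact K" using assms(2) by (simp add: C1c_def K_def)
  then have "K \<in> sets borel" by (simp add: borel_closed compact_imp_closed)
  have support: "u x = 0" if "x \<in> \<Omega>" "x \<notin> K" for x
    using that closure_subset[of "{x\<in>\<Omega>. u x \<noteq> 0}"] by (auto simp: K_def)
  obtain M where "0 < M" and M: "\<And>x. x \<in> \<Omega> \<Longrightarrow> \<bar>u x\<bar> \<le> M"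
    using C1c_bounded[OF assms(2)] unfolding bounded_pos by auto
  show ?thesis
  proof (rule ex_scale_le_one)
    show "ennreal (\<phi> M) * emeasure lborel K < \<infinity>"
      using emeasure_compact_finite[OF \<open>compact K\<close>] by (simp add: ennreal_mult_less_top)
    fix s :: real assume "1 \<le> s"
    have "(\<integral>\<^sup>+x\<in>\<Omega>. ennreal (\<phi> (\<bar>u x\<bar> / s)) \<partial>lebesgue) \<le> ennreal (\<phi> M / s) * emeasure lborel K"
      using assms(1) \<open>1 \<le> s\<close> \<open>K \<in> sets borel\<close> M support
      by (intro nn_integral_young_le_support[where K = K]) auto
    also have "\<dots> = ennreal (1 / s) * (ennreal (\<phi> M) * emeasure lborel K)"
    proof -
      have "ennreal (\<phi> M / s) = ennreal (1 / s) * ennreal (\<phi> M)"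
        using assms(1) \<open>0 < M\<close> \<open>1 \<le> s\<close> by (subst ennreal_mult[symmetric]) (auto simp: young_function_nonneg)
      then show ?thesis by (simp add: mult.assoc)
    qed
    finally show "(\<integral>\<^sup>+x\<in>\<Omega>. ennreal (\<phi> (\<bar>u x\<bar> / s)) \<partial>lebesgue) \<le> \<dots>" .
  qed
qed

lemma C1c_besov_modular_le_one:
  fixes u :: "'a::euclidean_space \<Rightarrow> real"
  assumes "young_function \<phi>" "\<alpha> \<le> 0" "open \<Omega>" "u \<in> C1c \<Omega>"
    and "Lambda_lower DIM('a) \<phi> \<alpha> < \<infinity>" and "\<not> bounded \<Omega> \<Longrightarrow> Lambda_upper DIM('a) \<phi> \<alpha> < \<infinity>"
  shows "\<exists>s>0. besov_modular \<alpha> \<phi> \<Omega> u s \<le> 1"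
proof -
  define K where "K = closure {x\<in>\<Omega>. u x \<noteq> 0}"
  have "compact K" using assms(4) by (simp add: C1c_def K_def)
  then have "K \<in> sets borel" by (simp add: borel_closed compact_imp_closed)
  have support: "u x = 0" if "x \<in> \<Omega>" "x \<notin> K" for x
    using that closure_subset[of "{x\<in>\<Omega>. u x \<noteq> 0}"] by (auto simp: K_def)
  obtain M where "0 < M" and M: "\<And>x. x \<in> \<Omega> \<Longrightarrow> \<bar>u x\<bar> \<le> M"
    using C1c_bounded[OF assms(4)] unfolding bounded_pos by auto
  obtain L0 where "L0-lipschitz_on \<Omega> u" using C1c_lipschitz[OF assms(4,3)] .
  define L where "L = L0 + 1"
  have "0 < L" using lipschitz_on_nonneg[OF \<open>L0-lipschitz_on \<Omega> u\<close>] by (simp add: L_def)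
  have lip: "\<bar>u x - u y\<bar> \<le> L * dist x y" if "x \<in> \<Omega>" "y \<in> \<Omega>" for x y
    using lipschitz_onD[OF lipschitz_on_le[OF \<open>L0-lipschitz_on \<Omega> u\<close>], of L x y] that
    by (simp add: L_def dist_real_def)
  define R where "R = (if bounded \<Omega> then ereal (diameter \<Omega>) else \<infinity>)"
  have dist_le_R: "ereal (dist x y) \<le> R" if "x \<in> \<Omega>" "y \<in> \<Omega>" for x y
    using that diameter_bounded_bound by (auto simp: R_def)
  show ?thesis
  proof (rule ex_scale_le_one)
    have "(\<integral>\<^sup>+z. ennreal (besov_profile \<phi> \<alpha> DIM('a) L (2 * M) R (norm z)) \<partial>(lborel::'a measure)) < \<infinity>"
      using assms(1,2,5,6) \<open>0 < L\<close> \<open>0 < M\<close>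
      by (intro nn_integral_besov_profile_finite) (auto simp: R_def split: if_splits)
    then show "2 * emeasure lborel K *
        (\<integral>\<^sup>+z. ennreal (besov_profile \<phi> \<alpha> DIM('a) L (2 * M) R (norm z)) \<partial>(lborel::'a measure)) < \<infinity>"
      using emeasure_compact_finite[OF \<open>compact K\<close>] by (simp add: ennreal_mult_less_top)
  qed (use assms(1) \<open>0 < L\<close> \<open>0 < M\<close> \<open>K \<in> sets borel\<close> lip M support dist_le_R
       in \<open>intro besov_modular_le_profile; simp\<close>)
qed

lemma orlicz_norm_less_top:
  "0 < s \<Longrightarrow> (\<integral>\<^sup>+x\<in>\<Omega>. ennreal (\<phi> (\<bar>u x\<bar> / s)) \<partial>lebesgue) \<le> 1 \<Longrightarrow> orlicz_norm \<phi> \<Omega> u < \<infinity>"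
  unfolding orlicz_norm_def by (rule INF_lower2[of s, THEN le_less_trans]) auto

lemma besov_seminorm_less_top:
  "0 < s \<Longrightarrow> besov_modular \<alpha> \<phi> \<Omega> u s \<le> 1 \<Longrightarrow> besov_seminorm \<alpha> \<phi> \<Omega> u < \<infinity>"
  unfolding besov_seminorm_def by (rule INF_lower2[of s, THEN le_less_trans]) auto

theorem lemma2p3:
  fixes \<Omega> :: "(real ^ 'n) set" and \<alpha> :: real and \<phi> :: "real \<Rightarrow> real"
  assumes "CARD('n) \<ge> 2"
    and "open \<Omega>" and "connected \<Omega>" and "\<Omega> \<noteq> {}"
    and "- real CARD('n) < \<alpha>" and "\<alpha> < 0"
    and "young_function \<phi>"
    and "Lambda_lower CARD('n) \<phi> \<alpha> < \<infinity>"
    and "\<not> bounded \<Omega> \<Longrightarrow> Lambda_upper CARD('n) \<phi> \<alpha> < \<infinity>"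
  shows "C1c \<Omega> \<subseteq> besov \<alpha> \<phi> \<Omega> \<and> besov \<alpha> \<phi> \<Omega> \<subseteq> dot_besov \<alpha> \<phi> \<Omega>"
proof
  show "besov \<alpha> \<phi> \<Omega> \<subseteq> dot_besov \<alpha> \<phi> \<Omega>" by (simp add: besov_def)
  have dim: "DIM(real ^ 'n) = CARD('n)" by simp
  show "C1c \<Omega> \<subseteq> besov \<alpha> \<phi> \<Omega>"
  proof
    fix u assume u: "u \<in> C1c \<Omega>"
    obtain s where "0 < s" "(\<integral>\<^sup>+x\<in>\<Omega>. ennreal (\<phi> (\<bar>u x\<bar> / s)) \<partial>lebesgue) \<le> 1"
      using C1c_orlicz_modular_le_one[OF assms(7) u] by blast
    then have "orlicz_norm \<phi> \<Omega> u < \<infinity>" by (rule orlicz_norm_less_top)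
    obtain s' where "0 < s'" "besov_modular \<alpha> \<phi> \<Omega> u s' \<le> 1"
      using C1c_besov_modular_le_one[OF assms(7) _ assms(2) u] assms(6,8,9) unfolding dim
      by (metis less_imp_le)
    then have "besov_seminorm \<alpha> \<phi> \<Omega> u < \<infinity>" by (rule besov_seminorm_less_top)
    with \<open>orlicz_norm \<phi> \<Omega> u < \<infinity>\<close> show "u \<in> besov \<alpha> \<phi> \<Omega>"
      using C1c_measurable[OF assms(2) u] by (simp add: besov_def orlicz_space_def dot_besov_def)
  qed
qed

end
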